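(* Under Conditions 1 and 2, there exist constants $n_0\ge1$ and $C>0$ such that for all $n>n_0$, $\sup_{t\ge0}R^{(n)}_\beta(t)\le C$.
   Context: Notation: $\mathbb Z_+=\{1,2,\dots\}$, $\mathbb R_+=[0,\infty)$. For each $n\ge1$: $\lambda^{(n)}>0$; a probability $\Lambda^{(n)}$ on $\mathbb R_+$ with tail $\bar\Lambda^{(n)}(t)=\Lambda^{(n)}((t,\infty))$, $\eta^{(n)}=\int_0^\infty y\Lambda^{(n)}(dy)$, $\sigma^{(n)}=\frac12\int_0^\infty y^2\Lambda^{(n)}(dy)$ finite; probability laws $(p_k^{(n)})_{k\ge1}$, $(q_k^{(n)})_{k\ge1}$ on $\mathbb Z_+$ with generating functions $g^{(n)},h^{(n)}$, $m^{(n)}=\sum_kkp_k^{(n)}<\infty$; $\gamma_n>0$ with $\gamma_n\to\infty$, $\gamma_n/n\to\gamma_*\in[0,\infty)$. $\phi^{(n)}(z)=n\gamma_n[g^{(n)}(1-z/n)-(1-z/n)]$, $\psi^{(n)}(z)=\gamma_n[1-h^{(n)}(1-z/n)]$ for $z\in[0,n]$. Condition 1: (i) $\lambda^{(n)}\to\lambda>0$, $\eta^{(n)}\to\eta>0$, $\sigma^{(n)}\to\sigma>0$, $\gamma_n(1-\lambda^{(n)}\eta^{(n)})\to b\in\mathbb R$; (ii) $\psi^{(n)}\to\psi$ uniformly on compacts of $[0,\infty)$; (iii) $\{\phi^{(n)}\}$ is uniformly Lipschitz on bounded intervals and converges uniformly on compacts to a continuous $\phi$. Under Condition 1, $\lambda\eta=1$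 and $m:=\lim_n\gamma_n(1-m^{(n)})$ exists (so $\gamma_n(1-\lambda^{(n)}\eta^{(n)}m^{(n)})\to b+m$). Condition 2 (for some $\alpha\in(1,2)$): (1) there are $C,k_0>0$ with $n\gamma_n\sum_{k\ge k_0}(k/n)^\alpha p^{(n)}_k+\sum_kk^\alpha q^{(n)}_k\le C$ for all $n$, and $\lim_{k_1\to\infty}\limsup_n\gamma_n\sum_{k\ge k_1}kp^{(n)}_k=0$; (2) there are $C_0>0$ and a probability $\Lambda^*$ on $\mathbb R_+$ with $\int t^{2\alpha}\Lambda^*(dt)<\infty$ and $\bar\Lambda^{(n)}\le C_0\bar\Lambda^*$ for all $n$. Fix $\beta\in[0,\infty)$ with $\beta>-(b+m)/(\sigma\lambda)$. Let $R^{(n)}$ be the unique locally integrable solution of $R^{(n)}(t)=\lambda^{(n)}m^{(n)}\bar\Lambda^{(n)}(t)+\lambda^{(n)}m^{(n)}\int_0^tR^{(n)}(t-s)\bar\Lambda^{(n)}(s)ds$, $t\ge0$, and $R^{(n)}_\beta(t)=e^{-\beta t/\gamma_n}R^{(n)}(t)$. *)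

theory Defs
  imports "HOL-Probability.Probability"
begin

definition prob_on_Rplus :: "real measure \<Rightarrow> bool" where
  "prob_on_Rplus M \<longleftrightarrow> prob_space M \<and> sets M = sets borel \<and> (AE y in M. 0 \<le> y)"

definition tail :: "real measure \<Rightarrow> real \<Rightarrow> real" where
  "tail M t = measure M {t<..}"

definition first_moment :: "real measure \<Rightarrow> real" where
  "first_moment M = (\<integral>y. y \<partial>M)"

definition half_second_moment :: "real measure \<Rightarrow> real" where
  "half_second_moment M = (1/2) * (\<integral>y. y^2 \<partial>M)"

definition prob_on_Zplus :: "(nat \<Rightarrow> real) \<Rightarrow> bool" where
  "prob_on_Zplus p \<longleftrightarrow> p 0 = 0 \<and> (\<forall>k. 0 \<le> p k) \<and> p sums 1"

definition genfun :: "(nat \<Rightarrow> real) \<Rightarrow> real \<Rightarrow> real" where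
  "genfun p z = (\<Sum>k. p k * z ^ k)"

definition mean_nat :: "(nat \<Rightarrow> real) \<Rightarrow> real" where
  "mean_nat p = (\<Sum>k. real k * p k)"

text \<open>phi^(n)(z) = n gamma_n [g^(n)(1 - z/n) - (1 - z/n)],
      psi^(n)(z) = gamma_n [1 - h^(n)(1 - z/n)]  (meaningful for z in [0,n]).\<close>
definition phi_n :: "(nat \<Rightarrow> real) \<Rightarrow> (nat \<Rightarrow> nat \<Rightarrow> real) \<Rightarrow> nat \<Rightarrow> real \<Rightarrow> real" where
  "phi_n gam p n z = real n * gam n * (genfun (p n) (1 - z / real n) - (1 - z / real n))"

definition psi_n :: "(nat \<Rightarrow> real) \<Rightarrow> (nat \<Rightarrow> nat \<Rightarrow> real) \<Rightarrow> nat \<Rightarrow> real \<Rightarrow> real" where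
  "psi_n gam q n z = gam n * (1 - genfun (q n) (1 - z / real n))"

definition renewal_solution :: "real \<Rightarrow> real measure \<Rightarrow> real \<Rightarrow> (real \<Rightarrow> real) \<Rightarrow> bool" where
  "renewal_solution lam M m R \<longleftrightarrow>
     (\<forall>T\<ge>0. set_integrable lborel {0..T} R) \<and>
     (\<forall>t\<ge>0. R t = lam * m * tail M t + lam * m * (LBINT s=0..t. R (t - s) * tail M s))"

end

theory Submission
  imports Defs
begin

text \<open>
  Tilting by \<open>\<theta> = \<beta>/\<gamma>\<^sub>n\<close> turns \<open>R\<^sup>(\<^sup>n\<^sup>)\<^sub>\<beta>\<close> into the solution of a renewal
  equation \<open>v = h + v * h\<close> whose kernel \<open>h(s) = \<lambda>m e\<^sup>-\<^sup>\<theta>\<^sup>s \<Lambda>bar(s)\<close> is nonincreasing and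
  bounded by \<open>c = \<lambda>m\<close>. Integrating \<open>e\<^sup>-\<^sup>y \<le> 1 - y + y\<^sup>\<alpha>\<close> against \<open>\<Lambda>bar\<close> bounds the mass of
  \<open>h\<close> by \<open>c (\<eta> - \<theta>\<sigma> + \<theta>\<^sup>\<alpha> \<integral> s\<^sup>\<alpha> \<Lambda>bar)\<close>; by Condition 1, \<open>\<gamma>\<^sub>n\<close> times the mass defect tends to
  \<open>b + m + \<lambda>\<sigma>\<beta> > 0\<close>, and by Condition 2 the \<open>\<alpha>\<close>-moments stay bounded, so for large \<open>n\<close>
  the mass is at most 1.

  For such a kernel a Volterra comparison principle shows that \<open>V(x) = \<integral>\<^sub>0\<^sup>x v\<close> satisfies
  \<open>V(s + x) - V(s) \<le> 1 + V(x)\<close>, and \<open>V \<le> 1\<close> on intervals of length \<open>1/(2c)\<close>. Hence \<open>v\<close> has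
  mass at most \<open>2 + 4c\<close> on every unit interval, and splitting \<open>v * h\<close> along unit intervals,
  where \<open>h\<close> is nonincreasing with total mass at most 1, gives \<open>v \<le> c + (c + 1)(2 + 4c)\<close>,
  uniformly in \<open>n\<close> since \<open>c \<longrightarrow> \<lambda>\<close>.
\<close>

lemma set_integral_Icc_reflect:
  fixes f :: "real \<Rightarrow> real"
  shows "(LBINT s:{0..t}. f (t - s)) = (LBINT s:{0..t}. f s)"
proof -
  have "(LBINT s:{0..t}. f s) = (LBINT x. indicator {0..t} x * f x)"
    by (simp add: set_lebesgue_integral_def)
  also have "\<dots> = \<bar>-1\<bar> *\<^sub>R (LBINT x. indicator {0..t} (t + -1 * x) * f (t + -1 * x))"
    by (rule lborel_integral_real_affine) simp
  also have "\<dots> = (LBINT x. indicator {0..t} x * f (t - x))"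
    by (auto intro!: Bochner_Integration.integral_cong simp: indicator_def)
  finally show ?thesis by (simp add: set_lebesgue_integral_def)
qed

lemma set_integrable_Icc_reflect_iff:
  fixes f :: "real \<Rightarrow> real"
  shows "set_integrable lborel {0..t} (\<lambda>s. f (t - s)) \<longleftrightarrow> set_integrable lborel {0..t} f"
proof -
  have "set_integrable lborel {0..t} f \<longleftrightarrow> integrable lborel (\<lambda>x. indicator {0..t} x * f x)"
    by (simp add: set_integrable_def)
  also have "\<dots> \<longleftrightarrow> integrable lborel (\<lambda>x. indicator {0..t} (t + -1 * x) * f (t + -1 * x))"
    by (rule lborel_integrable_real_affine_iff[symmetric]) simp
  also have "\<dots> \<longleftrightarrow> integrable lborel (\<lambda>x. indicator {0..t} x * f (t - x))"
    by (intro Bochner_Integration.integrable_cong) (auto simp: indicator_def)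
  finally show ?thesis by (simp add: set_integrable_def)
qed

lemma set_integral_Icc_split:
  fixes f :: "real \<Rightarrow> real"
  assumes "a \<le> b" "b \<le> c" "set_integrable lborel {a..c} f"
  shows "(LBINT s:{a..c}. f s) = (LBINT s:{a..b}. f s) + (LBINT s:{b..c}. f s)"
proof -
  have "{a..c} = {a..b} \<union> {b..c}" using assms by auto
  moreover have "(LBINT s:{a..b} \<union> {b..c}. f s) = (LBINT s:{a..b}. f s) + (LBINT s:{b..c}. f s)"
  proof (rule set_integral_Un_AE)
    show "AE x in lborel. \<not> (x \<in> {a..b} \<and> x \<in> {b..c})"
      using AE_lborel_singleton[of b] by eventually_elim auto
    show "set_integrable lborel {a..b} f" "set_integrable lborel {b..c} f"
      by (rule set_integrable_subset[OF assms(3)]; use assms in auto)+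
  qed auto
  ultimately show ?thesis by simp
qed

lemma set_integral_nonneg:
  fixes f :: "real \<Rightarrow> real"
  assumes "\<And>x. x \<in> A \<Longrightarrow> 0 \<le> f x"
  shows "0 \<le> (LBINT x:A. f x)"
  unfolding set_lebesgue_integral_def
  by (rule Bochner_Integration.integral_nonneg) (use assms in \<open>auto simp: indicator_def\<close>)

lemma set_integral_mono_set_nonneg:
  fixes f :: "real \<Rightarrow> real"
  assumes "set_integrable lborel B f" "A \<subseteq> B" "A \<in> sets borel" "\<And>x. x \<in> B \<Longrightarrow> 0 \<le> f x"
  shows "(LBINT x:A. f x) \<le> (LBINT x:B. f x)"
proof -
  have "set_integrable lborel A f" by (rule set_integrable_subset[OF assms(1)]) (use assms in auto)
  then show ?thesis
    using assms unfolding set_lebesgue_integral_def set_integrable_def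
    by (intro integral_mono) (auto simp: indicator_def)
qed

lemma set_integral_const_Icc:
  assumes "a \<le> b"
  shows "(LBINT x:{a..b}. (C::real)) = (b - a) * C"
  using assms by (subst set_integral_const) (auto simp: measure_lborel_Icc)

lemma set_integrable_mult_bounded:
  fixes f g :: "real \<Rightarrow> real"
  assumes "set_integrable lborel A f" "g \<in> borel_measurable borel" "\<And>x. \<bar>g x\<bar> \<le> B"
  shows "set_integrable lborel A (\<lambda>x. f x * g x)"
proof -
  have i: "integrable lborel (\<lambda>x. indicator A x * f x)"
    using assms(1) by (simp add: set_integrable_def)
  have "integrable lborel (\<lambda>x. indicator A x * f x * g x)"
  proof (rule Bochner_Integration.integrable_bound[where f="\<lambda>x. B * (indicator A x * f x)"])
    show "integrable lborel (\<lambda>x. B * (indicator A x * f x))" using i by simp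
    show "(\<lambda>x. indicator A x * f x * g x) \<in> borel_measurable lborel"
      using borel_measurable_integrable[OF i] assms(2) by measurable
    show "AE x in lborel. norm (indicator A x * f x * g x) \<le> norm (B * (indicator A x * f x))"
    proof (rule AE_I2)
      fix x
      have "\<bar>g x\<bar> \<le> \<bar>B\<bar>" using assms(3)[of x] by linarith
      then have "\<bar>indicator A x * f x\<bar> * \<bar>g x\<bar> \<le> \<bar>indicator A x * f x\<bar> * \<bar>B\<bar>"
        by (rule mult_left_mono) simp
      then show "norm (indicator A x * f x * g x) \<le> norm (B * (indicator A x * f x))"
        by (simp only: real_norm_def abs_mult ac_simps)
    qed
  qed
  then show ?thesis by (simp add: set_integrable_def mult.assoc)
qed

lemma set_integrable_Icc_bounded:
  fixes g :: "real \<Rightarrow> real"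
  assumes "g \<in> borel_measurable borel" "\<And>x. x \<in> {a..b} \<Longrightarrow> \<bar>g x\<bar> \<le> B"
  shows "set_integrable lborel {a..b} g"
proof (rule set_integrable_bound)
  show "set_integrable lborel {a..b} (\<lambda>x. B)"
    by (rule borel_integrable_atLeastAtMost') simp
  show "set_borel_measurable lborel {a..b} g"
    unfolding set_borel_measurable_def using assms(1) by measurable
  show "AE x\<in>{a..b} in lborel. norm (g x) \<le> norm B"
    using assms(2) by (intro AE_I2) (force intro: order_trans[OF _ abs_ge_self])
qed

lemma gronwall_zero:
  fixes f :: "real \<Rightarrow> real" and c t :: real
  assumes c: "0 < c"
    and f_nonneg: "\<And>t. 0 \<le> f t"
    and f_int: "\<And>T. 0 \<le> T \<Longrightarrow> set_integrable lborel {0..T} f"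
    and f_le: "\<And>t. 0 \<le> t \<Longrightarrow> f t \<le> c * (LBINT s:{0..t}. f s)"
    and t: "0 \<le> t"
  shows "f t = 0"
proof -
  define F where "F t = (LBINT s:{0..t}. f s)" for t
  have F_nonneg: "0 \<le> F t" for t
    unfolding F_def by (rule set_integral_nonneg) (use f_nonneg in auto)
  have F_split: "F u = F s + (LBINT x:{s..u}. f x)" if "0 \<le> s" "s \<le> u" for s u
    unfolding F_def by (rule set_integral_Icc_split) (use that f_int[of u] in auto)
  have F_mono: "F s \<le> F u" if "0 \<le> s" "s \<le> u" for s u
    using F_split[OF that] set_integral_nonneg[of "{s..u}" f] f_nonneg by simp
  define \<tau> where "\<tau> = 1 / (2 * c)"
  have \<tau>: "0 < \<tau>" "c * \<tau> = 1/2" using c by (auto simp: \<tau>_def)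
  have F_step: "F (b + \<tau>) = 0" if b: "0 \<le> b" and Fb: "F b = 0" for b
  proof -
    have "(LBINT x:{b..b + \<tau>}. f x) \<le> (LBINT x:{b..b + \<tau>}. c * F (b + \<tau>))"
    proof (rule set_integral_mono)
      show "set_integrable lborel {b..b + \<tau>} f"
        by (rule set_integrable_subset[OF f_int[of "b + \<tau>"]]) (use b \<tau> in auto)
      show "set_integrable lborel {b..b + \<tau>} (\<lambda>x. c * F (b + \<tau>))"
        by (rule set_integrable_Icc_bounded[where B="\<bar>c * F (b + \<tau>)\<bar>"]) auto
      fix x assume x: "x \<in> {b..b + \<tau>}"
      have "f x \<le> c * F x" using f_le[of x] x b by (simp add: F_def)
      also have "\<dots> \<le> c * F (b + \<tau>)" using F_mono[of x "b + \<tau>"] x b c by (intro mult_left_mono) auto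
      finally show "f x \<le> c * F (b + \<tau>)" .
    qed
    also have "\<dots> = (c * \<tau>) * F (b + \<tau>)" using \<tau> by (simp add: set_integral_const_Icc mult_ac)
    also have "\<dots> = F (b + \<tau>) / 2" using \<tau>(2) by simp
    finally have "F (b + \<tau>) \<le> F (b + \<tau>) / 2" using F_split[of b "b + \<tau>"] b \<tau> Fb by simp
    then show ?thesis using F_nonneg[of "b + \<tau>"] by simp
  qed
  have F0: "F 0 = 0"
    unfolding F_def set_lebesgue_integral_def
    by (rule integral_eq_zero_AE) (use AE_lborel_singleton[of 0] in \<open>eventually_elim, auto\<close>)
  have F_zero: "F (real k * \<tau>) = 0" for k :: nat
  proof (induction k)
    case (Suc k)
    have "real (Suc k) * \<tau> = real k * \<tau> + \<tau>" by (simp add: algebra_simps)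
    then show ?case using F_step[OF _ Suc.IH] \<tau> by simp
  qed (simp add: F0)
  obtain k :: nat where "t / \<tau> \<le> real k" using real_arch_simple by blast
  then have k: "t \<le> real k * \<tau>" using \<tau>(1) by (simp add: divide_le_eq)
  have "f t \<le> c * F t" using f_le[OF t] by (simp add: F_def)
  also have "\<dots> \<le> c * F (real k * \<tau>)" using F_mono[OF t k] c by (intro mult_left_mono) auto
  finally show ?thesis using F_zero[of k] f_nonneg[of t] by simp
qed

lemma volterra_comparison:
  fixes h d :: "real \<Rightarrow> real" and c t :: real
  assumes c: "0 < c" and h_meas: "h \<in> borel_measurable borel"
    and h_nonneg: "\<And>t. 0 \<le> h t" and h_le: "\<And>t. h t \<le> c"
    and d_meas: "d \<in> borel_measurable borel"
    and d_int: "\<And>T. 0 \<le> T \<Longrightarrow> set_integrable lborel {0..T} d"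
    and d_le: "\<And>t. 0 \<le> t \<Longrightarrow> d t \<le> (LBINT s:{0..t}. d (t - s) * h s)"
    and t: "0 \<le> t"
  shows "d t \<le> 0"
proof -
  define f where "f s = max (d s) 0" for s
  have f_meas: "f \<in> borel_measurable borel" unfolding f_def using d_meas by measurable
  have f_int: "set_integrable lborel {0..T} f" if "0 \<le> T" for T
  proof (rule set_integrable_bound[OF d_int[OF that]])
    show "set_borel_measurable lborel {0..T} f"
      unfolding set_borel_measurable_def using f_meas by measurable
  qed (auto simp: f_def)
  have f_le: "f t \<le> c * (LBINT s:{0..t}. f s)" if t: "0 \<le> t" for t
  proof -
    have h_abs: "\<bar>h x\<bar> \<le> c" for x using h_nonneg[of x] h_le[of x] by simp
    have "d t \<le> (LBINT s:{0..t}. d (t - s) * h s)" by (rule d_le[OF t])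
    also have "\<dots> \<le> (LBINT s:{0..t}. c * f (t - s))"
    proof (rule set_integral_mono)
      show "set_integrable lborel {0..t} (\<lambda>s. d (t - s) * h s)"
        by (rule set_integrable_mult_bounded[OF _ h_meas h_abs])
           (simp add: set_integrable_Icc_reflect_iff d_int[OF t])
      show "set_integrable lborel {0..t} (\<lambda>s. c * f (t - s))"
        by (rule set_integrable_mult_right) (simp add: set_integrable_Icc_reflect_iff f_int[OF t])
      fix s
      show "d (t - s) * h s \<le> c * f (t - s)"
      proof (cases "0 \<le> d (t - s)")
        case True
        then have "d (t - s) * h s \<le> d (t - s) * c" by (intro mult_left_mono h_le)
        then show ?thesis using True by (simp add: f_def mult.commute)
      next
        case False
        then have "d (t - s) * h s \<le> 0" using h_nonneg[of s] by (simp add: mult_nonpos_nonneg)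
        then show ?thesis using c False by (simp add: f_def)
      qed
    qed
    also have "\<dots> = c * (LBINT s:{0..t}. f s)" by (simp add: set_integral_Icc_reflect)
    finally have "d t \<le> c * (LBINT s:{0..t}. f s)" .
    moreover have "0 \<le> c * (LBINT s:{0..t}. f s)"
      using c by (intro mult_nonneg_nonneg set_integral_nonneg) (auto simp: f_def)
    ultimately show ?thesis by (simp add: f_def[of t])
  qed
  have "f t = 0"
    by (rule gronwall_zero[OF c _ f_int f_le t]) (simp add: f_def)
  then show ?thesis by (simp add: f_def)
qed

lemma set_integral_eq_nn_integral:
  fixes f :: "real \<Rightarrow> real"
  assumes "set_integrable lborel A f" "\<And>x. x \<in> A \<Longrightarrow> 0 \<le> f x"
  shows "ennreal (LBINT x:A. f x) = (\<integral>\<^sup>+x. indicator A x * ennreal (f x) \<partial>lborel)"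
  unfolding set_lebesgue_integral_def indicator_mult_ennreal
  using assms by (subst nn_integral_eq_integral) (auto simp: set_integrable_def indicator_def)

lemma set_integral_eq_of_nn_integral:
  fixes f :: "real \<Rightarrow> real"
  assumes [measurable]: "f \<in> borel_measurable borel" "A \<in> sets borel"
    and nonneg: "\<And>x. x \<in> A \<Longrightarrow> 0 \<le> f x" and r: "0 \<le> r"
    and nn: "(\<integral>\<^sup>+x. indicator A x * ennreal (f x) \<partial>lborel) = ennreal r"
  shows "set_integrable lborel A f" "(LBINT x:A. f x) = r"
proof -
  have "integrable lborel (\<lambda>x. indicator A x * f x)"
    by (rule integrableI_nn_integral_finite[OF _ _ nn[unfolded indicator_mult_ennreal]])
       (use nonneg in \<open>auto simp: indicator_def\<close>)
  then show int: "set_integrable lborel A f" by (simp add: set_integrable_def)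
  have "ennreal (LBINT x:A. f x) = ennreal r"
    using set_integral_eq_nn_integral[OF int nonneg] nn by simp
  then show "(LBINT x:A. f x) = r"
    using r set_integral_nonneg[of A f] nonneg by simp
qed

lemma borel_measurable_lborel_pair:
  fixes f :: "real \<times> real \<Rightarrow> 'a::topological_space"
  assumes "f \<in> borel_measurable (borel \<Otimes>\<^sub>M borel)"
  shows "f \<in> borel_measurable (lborel \<Otimes>\<^sub>M lborel)"
proof -
  have "sets (lborel \<Otimes>\<^sub>M lborel) = sets (borel \<Otimes>\<^sub>M (borel::real measure))"
    by (intro sets_pair_measure_cong) simp_all
  then show ?thesis using assms measurable_cong_sets by blast
qed

lemma nn_integral_Icc_convolution:
  fixes f g :: "real \<Rightarrow> ennreal"
  assumes [measurable]: "f \<in> borel_measurable borel" "g \<in> borel_measurable borel"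
  shows "(\<integral>\<^sup>+u. indicator {0..t} u * (\<integral>\<^sup>+r. indicator {0..u} r * f (u - r) * g r \<partial>lborel) \<partial>lborel)
       = (\<integral>\<^sup>+r. indicator {0..t} r * g r * (\<integral>\<^sup>+s. indicator {0..t - r} s * f s \<partial>lborel) \<partial>lborel)"
proof -
  have "(\<integral>\<^sup>+u. indicator {0..t} u * (\<integral>\<^sup>+r. indicator {0..u} r * f (u - r) * g r \<partial>lborel) \<partial>lborel)
      = (\<integral>\<^sup>+u. \<integral>\<^sup>+r. indicator {0..t} u * indicator {0..u} r * f (u - r) * g r \<partial>lborel \<partial>lborel)"
    by (subst nn_integral_cmult[symmetric]) (simp_all add: mult.assoc)
  also have "\<dots> = (\<integral>\<^sup>+r. \<integral>\<^sup>+u. indicator {0..t} u * indicator {0..u} r * f (u - r) * g r \<partial>lborel \<partial>lborel)"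
    by (rule lborel_pair.Fubini'[symmetric], rule borel_measurable_lborel_pair)
       (unfold indicator_def atLeastAtMost_iff, measurable)
  also have "\<dots> = (\<integral>\<^sup>+r. indicator {0..t} r * g r * (\<integral>\<^sup>+s. indicator {0..t - r} s * f s \<partial>lborel) \<partial>lborel)"
  proof (rule nn_integral_cong)
    fix r :: real
    have "(\<integral>\<^sup>+u. indicator {0..t} u * indicator {0..u} r * f (u - r) * g r \<partial>lborel)
        = (\<integral>\<^sup>+u. indicator {0..t} r * g r * (indicator {r..t} u * f (u - r)) \<partial>lborel)"
      by (intro nn_integral_cong) (auto simp: indicator_def mult.commute)
    also have "\<dots> = indicator {0..t} r * g r * (\<integral>\<^sup>+u. indicator {r..t} u * f (u - r) \<partial>lborel)"
      by (rule nn_integral_cmult) measurable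
    also have "(\<integral>\<^sup>+u. indicator {r..t} u * f (u - r) \<partial>lborel)
        = ennreal \<bar>1\<bar> * (\<integral>\<^sup>+s. indicator {r..t} (r + 1 * s) * f ((r + 1 * s) - r) \<partial>lborel)"
      by (rule nn_integral_real_affine) measurable
    also have "\<dots> = (\<integral>\<^sup>+s. indicator {0..t - r} s * f s \<partial>lborel)"
      by (auto intro!: nn_integral_cong simp: indicator_def)
    finally show "(\<integral>\<^sup>+u. indicator {0..t} u * indicator {0..u} r * f (u - r) * g r \<partial>lborel)
        = indicator {0..t} r * g r * (\<integral>\<^sup>+s. indicator {0..t - r} s * f s \<partial>lborel)" .
  qed
  finally show ?thesis .
qed

locale renewal_equation =
  fixes h v :: "real \<Rightarrow> real" and c :: real
  assumes c_pos: "0 < c"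
    and h_meas [measurable]: "h \<in> borel_measurable borel"
    and h_nonneg: "\<And>t. 0 \<le> h t"
    and h_le: "\<And>t. h t \<le> c"
    and h_antimono: "\<And>s t. 0 \<le> s \<Longrightarrow> s \<le> t \<Longrightarrow> h t \<le> h s"
    and h_mass: "\<And>x. 0 \<le> x \<Longrightarrow> (LBINT s:{0..x}. h s) \<le> 1"
    and v_meas [measurable]: "v \<in> borel_measurable borel"
    and v_int: "\<And>T. 0 \<le> T \<Longrightarrow> set_integrable lborel {0..T} v"
    and v_eq: "\<And>t. 0 \<le> t \<Longrightarrow> v t = h t + (LBINT s:{0..t}. v (t - s) * h s)"
begin

lemma h_abs_le: "\<bar>h x\<bar> \<le> c"
  using h_nonneg[of x] h_le[of x] by simp

lemma h_int: "set_integrable lborel {a..b} h"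
  by (rule set_integrable_Icc_bounded[OF h_meas h_abs_le])

lemma convolution_integrable:
  "set_integrable lborel {0..t} f \<Longrightarrow> set_integrable lborel {0..t} (\<lambda>s. f (t - s) * h s)"
  by (rule set_integrable_mult_bounded[OF _ h_meas h_abs_le]) (simp add: set_integrable_Icc_reflect_iff)

lemma v_nonneg:
  assumes t: "0 \<le> t"
  shows "0 \<le> v t"
proof -
  have "- v t \<le> 0"
  proof (rule volterra_comparison[OF c_pos h_meas h_nonneg h_le, of "\<lambda>x. - v x"])
    show "set_integrable lborel {0..T} (\<lambda>x. - v x)" if "0 \<le> T" for T
      using v_int[OF that] by (simp add: set_integrable_def)
    show "- v t \<le> (LBINT s:{0..t}. - v (t - s) * h s)" if t: "0 \<le> t" for t
      using v_eq[OF t] h_nonneg[of t] by (simp add: set_lebesgue_integral_def)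
  qed (use t in auto)
  then show ?thesis by simp
qed

definition H :: "real \<Rightarrow> real" where "H x = (LBINT s:{0..x}. h s)"

definition V :: "real \<Rightarrow> real" where "V x = (LBINT s:{0..x}. v s)"

lemma H_nonneg: "0 \<le> H x"
  unfolding H_def by (rule set_integral_nonneg) (use h_nonneg in auto)

lemma H_le_one: "0 \<le> x \<Longrightarrow> H x \<le> 1"
  unfolding H_def by (rule h_mass)

lemma H_split: "0 \<le> s \<Longrightarrow> s \<le> u \<Longrightarrow> H u = H s + (LBINT x:{s..u}. h x)"
  unfolding H_def by (rule set_integral_Icc_split[OF _ _ h_int])

lemma H_le_linear:
  assumes "0 \<le> x"
  shows "H x \<le> c * x"
proof -
  have "H x \<le> (LBINT s:{0..x}. c)"
    unfolding H_def by (rule set_integral_mono[OF h_int]) (auto simp: h_le intro!: borel_integrable_atLeastAtMost')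
  also have "\<dots> = c * x" using assms by (simp add: set_integral_const_Icc)
  finally show ?thesis .
qed

lemma V_nonneg: "0 \<le> V x"
  unfolding V_def by (rule set_integral_nonneg) (use v_nonneg in auto)

lemma V_split: "0 \<le> s \<Longrightarrow> s \<le> u \<Longrightarrow> V u = V s + (LBINT x:{s..u}. v x)"
  unfolding V_def by (rule set_integral_Icc_split) (use v_int[of u] in auto)

lemma V_mono:
  assumes "s \<le> u"
  shows "V s \<le> V u"
proof (cases "0 \<le> s")
  case True
  then show ?thesis
    using V_split[OF True assms] set_integral_nonneg[of "{s..u}" v] v_nonneg by simp
next
  case False
  then have "V s = 0" by (simp add: V_def set_lebesgue_integral_def)
  then show ?thesis using V_nonneg by simp
qed

lemma V_meas [measurable]: "V \<in> borel_measurable borel"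
  by (rule borel_measurable_mono) (auto simp: mono_def V_mono)

lemma V_int: "0 \<le> T \<Longrightarrow> set_integrable lborel {0..T} V"
  by (rule set_integrable_Icc_bounded[where B="V T"]) (use V_mono V_nonneg in \<open>auto simp: abs_of_nonneg\<close>)

definition conv_vh :: "real \<Rightarrow> real" where "conv_vh u = (LBINT s:{0..u}. v (u - s) * h s)"

lemma conv_vh_nonneg: "0 \<le> conv_vh u"
  unfolding conv_vh_def by (rule set_integral_nonneg) (auto intro!: mult_nonneg_nonneg v_nonneg h_nonneg)

lemma conv_vh_int:
  assumes "0 \<le> t"
  shows "set_integrable lborel {0..t} conv_vh"
proof -
  have "set_integrable lborel {0..t} (\<lambda>u. v u - h u)" by (intro set_integral_diff(1) v_int[OF assms] h_int)
  then show ?thesis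
    using set_integrable_cong[of lborel lborel "{0..t}" "{0..t}" conv_vh "\<lambda>u. v u - h u"] v_eq
    by (auto simp: conv_vh_def)
qed

lemma ennreal_conv_vh:
  assumes "0 \<le> u"
  shows "ennreal (conv_vh u) = (\<integral>\<^sup>+r. indicator {0..u} r * ennreal (v (u - r)) * ennreal (h r) \<partial>lborel)"
proof -
  have "ennreal (conv_vh u) = (\<integral>\<^sup>+r. indicator {0..u} r * ennreal (v (u - r) * h r) \<partial>lborel)"
    unfolding conv_vh_def using convolution_integrable[OF v_int[OF assms]]
    by (rule set_integral_eq_nn_integral) (auto intro!: mult_nonneg_nonneg v_nonneg h_nonneg)
  then show ?thesis by (simp add: ennreal_mult'' h_nonneg mult.assoc)
qed

lemma ennreal_V:
  assumes "0 \<le> x"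
  shows "ennreal (V x) = (\<integral>\<^sup>+s. indicator {0..x} s * ennreal (v s) \<partial>lborel)"
  unfolding V_def by (rule set_integral_eq_nn_integral[OF v_int[OF assms]]) (auto intro: v_nonneg)

text \<open>Fubini: both sides integrate \<open>v(r) h(s)\<close> over the triangle \<open>r, s \<ge> 0, r + s \<le> t\<close>.\<close>

lemma set_integral_conv_vh:
  assumes t: "0 \<le> t"
  shows "(LBINT u:{0..t}. conv_vh u) = (LBINT s:{0..t}. V (t - s) * h s)"
proof -
  have "ennreal (LBINT u:{0..t}. conv_vh u) = (\<integral>\<^sup>+u. indicator {0..t} u * ennreal (conv_vh u) \<partial>lborel)"
    by (rule set_integral_eq_nn_integral[OF conv_vh_int[OF t] conv_vh_nonneg])
  also have "\<dots> = (\<integral>\<^sup>+u. indicator {0..t} u *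
      (\<integral>\<^sup>+r. indicator {0..u} r * ennreal (v (u - r)) * ennreal (h r) \<partial>lborel) \<partial>lborel)"
    by (intro nn_integral_cong) (auto simp: ennreal_conv_vh indicator_def)
  also have "\<dots> = (\<integral>\<^sup>+r. indicator {0..t} r * ennreal (h r) *
      (\<integral>\<^sup>+s. indicator {0..t - r} s * ennreal (v s) \<partial>lborel) \<partial>lborel)"
    by (rule nn_integral_Icc_convolution) measurable
  also have "\<dots> = (\<integral>\<^sup>+r. indicator {0..t} r * ennreal (V (t - r) * h r) \<partial>lborel)"
    by (intro nn_integral_cong)
       (auto simp: ennreal_V ennreal_mult h_nonneg V_nonneg mult.commute indicator_def)
  also have "\<dots> = ennreal (LBINT s:{0..t}. V (t - s) * h s)"
    by (rule set_integral_eq_nn_integral[symmetric, OF convolution_integrable[OF V_int[OF t]]])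
       (auto intro!: mult_nonneg_nonneg V_nonneg h_nonneg)
  finally show ?thesis
    using set_integral_nonneg[of "{0..t}" conv_vh] conv_vh_nonneg
      set_integral_nonneg[of "{0..t}" "\<lambda>s. V (t - s) * h s"] V_nonneg h_nonneg
    by (simp add: ennreal_inj)
qed

lemma V_eq:
  assumes t: "0 \<le> t"
  shows "V t = H t + (LBINT s:{0..t}. V (t - s) * h s)"
proof -
  have "V t = (LBINT u:{0..t}. h u + conv_vh u)"
    unfolding V_def by (rule set_lebesgue_integral_cong) (auto simp: v_eq conv_vh_def)
  also have "\<dots> = H t + (LBINT u:{0..t}. conv_vh u)"
    unfolding H_def by (rule set_integral_add(2)[OF h_int conv_vh_int[OF t]])
  finally show ?thesis using set_integral_conv_vh[OF t] by simp
qed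

lemma V_le_one:
  assumes x: "0 \<le> x" "c * x \<le> 1/2"
  shows "V x \<le> 1"
proof -
  have "(LBINT s:{0..x}. V (x - s) * h s) \<le> (LBINT s:{0..x}. V x * h s)"
  proof (rule set_integral_mono)
    show "set_integrable lborel {0..x} (\<lambda>s. V (x - s) * h s)"
      by (rule convolution_integrable[OF V_int[OF x(1)]])
    show "set_integrable lborel {0..x} (\<lambda>s. V x * h s)" by (intro set_integrable_mult_right h_int)
    show "V (x - s) * h s \<le> V x * h s" if "s \<in> {0..x}" for s
      using that V_mono[of "x - s" x] h_nonneg[of s] by (intro mult_right_mono) auto
  qed
  also have "\<dots> = V x * H x" by (simp add: H_def)
  finally have "V x \<le> H x + V x * H x" using V_eq[OF x(1)] by simp
  moreover have "H x \<le> 1/2" using H_le_linear[OF x(1)] x(2) by simp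
  moreover have "V x * H x \<le> V x * (1/2)" using calculation(2) V_nonneg by (rule mult_left_mono)
  ultimately show ?thesis by simp
qed

lemma V_increment_subsolution:
  assumes x: "0 \<le> x" and s: "0 \<le> s"
  shows "V (s + x) - V s - (1 + V x) \<le> (LBINT q:{0..s}. (V (s - q + x) - V (s - q) - (1 + V x)) * h q)"
proof -
  define K where "K = 1 + V x"
  have sx: "0 \<le> s + x" using s x by simp
  have int_sx: "set_integrable lborel {0..s + x} (\<lambda>q. V (s + x - q) * h q)"
    by (rule convolution_integrable[OF V_int[OF sx]])
  define A where "A = (LBINT q:{0..s}. V (s + x - q) * h q)"
  define B where "B = (LBINT q:{s..s + x}. V (s + x - q) * h q)"
  define A' where "A' = (LBINT q:{0..s}. V (s - q) * h q)"
  have "(LBINT q:{0..s}. (V (s - q + x) - V (s - q) - K) * h q)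
      = (LBINT q:{0..s}. V (s + x - q) * h q - V (s - q) * h q - K * h q)"
    by (rule set_lebesgue_integral_cong) (auto simp: algebra_simps)
  also have "\<dots> = A - A' - K * H s"
    using set_integrable_subset[OF int_sx, of "{0..s}"] convolution_integrable[OF V_int[OF s]] h_int x
    by (simp add: A_def A'_def H_def)
  finally have conv: "(LBINT q:{0..s}. (V (s - q + x) - V (s - q) - K) * h q) = A - A' - K * H s" .
  have "B \<le> (LBINT q:{s..s + x}. V x * h q)"
    unfolding B_def
  proof (rule set_integral_mono)
    show "set_integrable lborel {s..s + x} (\<lambda>q. V (s + x - q) * h q)"
      by (rule set_integrable_subset[OF int_sx]) (use s in auto)
    show "set_integrable lborel {s..s + x} (\<lambda>q. V x * h q)" by (intro set_integrable_mult_right h_int)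
    show "V (s + x - q) * h q \<le> V x * h q" if "q \<in> {s..s + x}" for q
      using that h_nonneg[of q] V_mono[of "s + x - q" x] s by (intro mult_right_mono) auto
  qed
  also have "\<dots> = V x * (H (s + x) - H s)" using H_split[OF s, of "s + x"] x by simp
  finally have "V (s + x) - V s - K - (LBINT q:{0..s}. (V (s - q + x) - V (s - q) - K) * h q)
      \<le> K * (H (s + x) - 1)"
    using V_eq[OF sx] set_integral_Icc_split[OF s _ int_sx] x V_eq[OF s] conv
    by (simp add: A_def B_def A'_def K_def algebra_simps)
  also have "\<dots> \<le> 0"
    using H_le_one[OF sx] V_nonneg[of x] by (simp add: K_def mult_nonneg_nonpos)
  finally show ?thesis by (simp add: K_def)
qed

lemma V_increment_le:
  assumes x: "0 \<le> x" and s: "0 \<le> s"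
  shows "V (s + x) - V s \<le> 1 + V x"
proof -
  define D where "D s = V (s + x) - V s - (1 + V x)" for s
  have "D s \<le> 0"
  proof (rule volterra_comparison[OF c_pos h_meas h_nonneg h_le, of D])
    show "D \<in> borel_measurable borel" unfolding D_def by measurable
    show "set_integrable lborel {0..T} D" if T: "0 \<le> T" for T
    proof (rule set_integrable_Icc_bounded[where B="V (T + x) + V T + 1 + V x"])
      show "D \<in> borel_measurable borel" unfolding D_def by measurable
      show "\<bar>D y\<bar> \<le> V (T + x) + V T + 1 + V x" if "y \<in> {0..T}" for y
        using that V_nonneg[of "y + x"] V_nonneg[of y] V_nonneg[of x] V_mono[of "y + x" "T + x"] V_mono[of y T]
        unfolding D_def abs_le_iff by auto
    qed
    show "D t \<le> (LBINT q:{0..t}. D (t - q) * h q)" if "0 \<le> t" for t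
      unfolding D_def by (rule V_increment_subsolution[OF x that])
  qed (use s in auto)
  then show ?thesis by (simp add: D_def)
qed

lemma V_unit_increment_le:
  assumes s: "0 \<le> s"
  shows "V (s + 1) - V s \<le> 2 + 4 * c"
proof -
  \<comment> \<open>cover \<open>[s, s + 1]\<close> by \<open>\<lceil>2c\<rceil>\<close> steps of length \<open>1/(2c)\<close>, each adding at most \<open>1 + V (1/(2c)) \<le> 2\<close>\<close>
  define \<tau> where "\<tau> = 1 / (2 * c)"
  have \<tau>: "0 < \<tau>" "c * \<tau> = 1/2" using c_pos by (auto simp: \<tau>_def)
  have steps: "V (s + real k * \<tau>) - V s \<le> 2 * real k" for k :: nat
  proof (induction k)
    case (Suc k)
    have "V (s + real k * \<tau> + \<tau>) - V (s + real k * \<tau>) \<le> 1 + V \<tau>"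
      using V_increment_le[of \<tau> "s + real k * \<tau>"] \<tau> s by simp
    also have "\<dots> \<le> 2" using V_le_one[of \<tau>] \<tau> by simp
    finally show ?case using Suc.IH by (simp add: algebra_simps)
  qed simp
  define k where "k = nat \<lceil>2 * c\<rceil>"
  have k: "2 * c \<le> real k" "real k \<le> 2 * c + 1" using c_pos by (auto simp: k_def)
  have "1 \<le> real k * \<tau>" using k(1) c_pos by (simp add: \<tau>_def field_simps)
  then have "V (s + 1) \<le> V (s + real k * \<tau>)" by (intro V_mono) simp
  then show ?thesis using steps[of k] k(2) by simp
qed

lemma window_integral_le:
  assumes t: "0 \<le> t"
  shows "(LBINT s:{0..t}. indicator {real j..<real j + 1} s * v (t - s)) \<le> 2 + 4 * c"
proof -
  define p where "p = max (t - real j - 1) 0"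
  have p: "0 \<le> p" by (simp add: p_def)
  have "(LBINT s:{0..t}. indicator {real j..<real j + 1} s * v (t - s))
      = (LBINT r:{0..t}. indicator {real j..<real j + 1} (t - r) * v r)"
    using set_integral_Icc_reflect[of t "\<lambda>r. indicator {real j..<real j + 1} (t - r) * v r"] by simp
  also have "\<dots> \<le> (LBINT r:{p..p + 1}. v r)"
    unfolding set_lebesgue_integral_def
  proof (rule integral_mono)
    have "set_integrable lborel {0..t} (\<lambda>r. v r * indicator {real j..<real j + 1} (t - r))"
      by (rule set_integrable_mult_bounded[OF v_int[OF t], where B=1]) (auto simp: indicator_def)
    then show "integrable lborel (\<lambda>r. indicator {0..t} r *\<^sub>R (indicator {real j..<real j + 1} (t - r) * v r))"
      by (simp add: set_integrable_def mult.commute)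
    show "integrable lborel (\<lambda>r. indicator {p..p + 1} r *\<^sub>R v r)"
      using set_integrable_subset[OF v_int[of "p + 1"]] p by (simp add: set_integrable_def)
    show "indicator {0..t} r *\<^sub>R (indicator {real j..<real j + 1} (t - r) * v r) \<le> indicator {p..p + 1} r *\<^sub>R v r"
      for r
      using v_nonneg[of r] p by (auto simp: indicator_def p_def)
  qed
  also have "\<dots> = V (p + 1) - V p" using V_split[OF p, of "p + 1"] by simp
  also have "\<dots> \<le> 2 + 4 * c" by (rule V_unit_increment_le[OF p])
  finally show ?thesis .
qed

lemma sum_h_le_H: "(\<Sum>j<M. h (real j + 1)) \<le> H (real M)"
proof (induction M)
  case (Suc M)
  have "h (real M + 1) = (LBINT s:{real M..real M + 1}. h (real M + 1))"
    by (simp add: set_integral_const_Icc)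
  also have "\<dots> \<le> (LBINT s:{real M..real M + 1}. h s)"
    by (rule set_integral_mono[OF _ h_int]) (auto intro!: h_antimono borel_integrable_atLeastAtMost')
  also have "\<dots> = H (real (Suc M)) - H (real M)"
    using H_split[of "real M" "real M + 1"] by (simp add: add.commute)
  finally show ?case using Suc.IH by simp
qed (simp add: H_nonneg)

lemma convolution_le_window_sum:
  assumes t: "0 \<le> t"
  shows "(LBINT s:{0..t}. v (t - s) * h s)
    \<le> (\<Sum>j<Suc (nat \<lceil>t\<rceil>). h (real j) * (LBINT s:{0..t}. indicator {real j..<real j + 1} s * v (t - s)))"
proof -
  define N where "N = Suc (nat \<lceil>t\<rceil>)"
  define f where "f j s = h (real j) * (indicator {real j..<real j + 1} s * v (t - s))" for j s
  have f_int: "set_integrable lborel {0..t} (f j)" for j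
  proof -
    have "set_integrable lborel {0..t} (\<lambda>s. v (t - s) * (h (real j) * indicator {real j..<real j + 1} s))"
      by (rule set_integrable_mult_bounded[where B=c])
         (use h_nonneg h_le c_pos in \<open>auto simp: set_integrable_Icc_reflect_iff v_int[OF t] indicator_def\<close>)
    then show ?thesis by (simp add: f_def[abs_def] mult_ac)
  qed
  have "(LBINT s:{0..t}. v (t - s) * h s) \<le> (LBINT s:{0..t}. \<Sum>j<N. f j s)"
  proof (rule set_integral_mono)
    show "set_integrable lborel {0..t} (\<lambda>s. v (t - s) * h s)"
      by (rule convolution_integrable[OF v_int[OF t]])
    show "set_integrable lborel {0..t} (\<lambda>s. \<Sum>j<N. f j s)"
      unfolding set_integrable_def scaleR_sum_right
      by (intro Bochner_Integration.integrable_sum) (use f_int in \<open>simp add: set_integrable_def\<close>)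
    fix s assume s: "s \<in> {0..t}"
    define i where "i = nat \<lfloor>s\<rfloor>"
    have i: "real i \<le> s" "s < real i + 1" "i < N" using s by (auto simp: i_def N_def) linarith
    have "v (t - s) * h s \<le> v (t - s) * h (real i)"
      using h_antimono[of "real i" s] i v_nonneg[of "t - s"] s by (intro mult_left_mono) auto
    also have "\<dots> = f i s" using i by (simp add: f_def indicator_def)
    also have "\<dots> \<le> (\<Sum>j<N. f j s)"
      by (rule member_le_sum) (use i s v_nonneg h_nonneg in \<open>auto simp: f_def indicator_def\<close>)
    finally show "v (t - s) * h s \<le> (\<Sum>j<N. f j s)" .
  qed
  also have "\<dots> = (\<Sum>j<N. (LBINT s:{0..t}. f j s))"
    unfolding set_lebesgue_integral_def scaleR_sum_right
    by (rule Bochner_Integration.integral_sum) (use f_int in \<open>simp add: set_integrable_def\<close>)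
  finally show ?thesis by (simp add: N_def f_def)
qed

lemma v_bounded:
  assumes t: "0 \<le> t"
  shows "v t \<le> c + (c + 1) * (2 + 4 * c)"
proof -
  have "(LBINT s:{0..t}. v (t - s) * h s)
      \<le> (\<Sum>j<Suc (nat \<lceil>t\<rceil>). h (real j) * (LBINT s:{0..t}. indicator {real j..<real j + 1} s * v (t - s)))"
    by (rule convolution_le_window_sum[OF t])
  also have "\<dots> \<le> (\<Sum>j<Suc (nat \<lceil>t\<rceil>). h (real j) * (2 + 4 * c))"
    by (intro sum_mono mult_left_mono window_integral_le[OF t] h_nonneg)
  also have "\<dots> = (h 0 + (\<Sum>j<nat \<lceil>t\<rceil>. h (real j + 1))) * (2 + 4 * c)"
    unfolding sum_distrib_right[symmetric] by (subst sum.lessThan_Suc_shift) (simp add: add.commute)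
  also have "\<dots> \<le> (c + 1) * (2 + 4 * c)"
    using h_le[of 0] sum_h_le_H[of "nat \<lceil>t\<rceil>"] H_le_one[of "real (nat \<lceil>t\<rceil>)"] c_pos
    by (intro mult_right_mono) auto
  finally show ?thesis using v_eq[OF t] h_le[of t] by simp
qed

end

lemma tail_nonneg: "0 \<le> tail M t"
  by (simp add: tail_def)

lemma
  assumes "prob_on_Rplus M"
  shows tail_le_one: "tail M t \<le> 1"
    and tail_antimono: "s \<le> t \<Longrightarrow> tail M t \<le> tail M s"
    and borel_measurable_tail [measurable]: "tail M \<in> borel_measurable borel"
proof -
  interpret prob_space M using assms by (simp add: prob_on_Rplus_def)
  have sets_M: "sets M = sets borel" using assms by (simp add: prob_on_Rplus_def)
  show "tail M t \<le> 1" by (simp add: tail_def)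
  have antimono: "tail M t \<le> tail M s" if "s \<le> t" for s t
    unfolding tail_def by (rule finite_measure_mono) (use that sets_M in auto)
  then show "s \<le> t \<Longrightarrow> tail M t \<le> tail M s" .
  have "(\<lambda>t. - tail M t) \<in> borel_measurable borel"
    by (rule borel_measurable_mono) (auto simp: mono_def intro: antimono)
  then show "tail M \<in> borel_measurable borel"
    using borel_measurable_uminus[of "\<lambda>t. - tail M t"] by simp
qed

lemma nn_integral_weighted_tail:
  fixes f :: "real \<Rightarrow> real"
  assumes M: "prob_on_Rplus M" and [measurable]: "f \<in> borel_measurable borel"
  shows "(\<integral>\<^sup>+s. indicator {0..} s * ennreal (f s * tail M s) \<partial>lborel)
       = (\<integral>\<^sup>+y. (\<integral>\<^sup>+s. indicator {0..<y} s * ennreal (f s) \<partial>lborel) \<partial>M)"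
proof -
  interpret prob_space M using M by (simp add: prob_on_Rplus_def)
  have sets_M: "sets M = sets borel" using M by (simp add: prob_on_Rplus_def)
  interpret pair_sigma_finite lborel M
    by (intro pair_sigma_finite.intro sigma_finite_lborel) unfold_locales
  have [measurable]: "measurable M = measurable borel" by (intro ext measurable_cong_sets) (auto simp: sets_M)
  have "(\<integral>\<^sup>+s. indicator {0..} s * ennreal (f s * tail M s) \<partial>lborel)
      = (\<integral>\<^sup>+s. (\<integral>\<^sup>+y. indicator {0..} s * ennreal (f s) * indicator {s<..} y \<partial>M) \<partial>lborel)"
  proof (rule nn_integral_cong)
    fix s :: real
    have "(\<integral>\<^sup>+y. indicator {0..} s * ennreal (f s) * indicator {s<..} y \<partial>M)
        = indicator {0..} s * ennreal (f s) * emeasure M {s<..}"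
      using sets_M by (intro nn_integral_cmult_indicator) simp
    then show "indicator {0..} s * ennreal (f s * tail M s)
        = (\<integral>\<^sup>+y. indicator {0..} s * ennreal (f s) * indicator {s<..} y \<partial>M)"
      by (simp add: tail_def emeasure_eq_measure ennreal_mult'' mult.assoc)
  qed
  also have "\<dots> = (\<integral>\<^sup>+y. (\<integral>\<^sup>+s. indicator {0..} s * ennreal (f s) * indicator {s<..} y \<partial>lborel) \<partial>M)"
  proof (rule Fubini'[symmetric])
    have "sets (lborel \<Otimes>\<^sub>M M) = sets (borel \<Otimes>\<^sub>M (borel::real measure))"
      by (intro sets_pair_measure_cong) (simp_all add: sets_M)
    moreover have "(\<lambda>(s, y). indicator {0..} s * ennreal (f s) * indicator {s<..} y)
        \<in> borel_measurable (borel \<Otimes>\<^sub>M (borel::real measure))"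
      unfolding indicator_def greaterThan_iff atLeast_iff by measurable
    ultimately show "(\<lambda>(s, y). indicator {0..} s * ennreal (f s) * indicator {s<..} y)
        \<in> borel_measurable (lborel \<Otimes>\<^sub>M M)"
      using measurable_cong_sets by blast
  qed
  also have "\<dots> = (\<integral>\<^sup>+y. (\<integral>\<^sup>+s. indicator {0..<y} s * ennreal (f s) \<partial>lborel) \<partial>M)"
    by (intro nn_integral_cong) (auto simp: indicator_def)
  finally show ?thesis .
qed

lemma tail_integral_eq_first_moment:
  assumes M: "prob_on_Rplus M" and int: "integrable M (\<lambda>y. y)"
  shows "set_integrable lborel {0..} (tail M)" "(LBINT s:{0..}. tail M s) = first_moment M"
proof -
  have nonneg: "AE y in M. 0 \<le> y" using M by (simp add: prob_on_Rplus_def)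
  have "(\<integral>\<^sup>+s. indicator {0..} s * ennreal (tail M s) \<partial>lborel)
      = (\<integral>\<^sup>+y. (\<integral>\<^sup>+s. indicator {0..<y} s \<partial>lborel) \<partial>M)"
    using nn_integral_weighted_tail[OF M, of "\<lambda>_. 1"] by simp
  also have "\<dots> = (\<integral>\<^sup>+y. ennreal y \<partial>M)"
    using nonneg by (intro nn_integral_cong_AE) auto
  also have "\<dots> = ennreal (first_moment M)"
    unfolding first_moment_def by (rule nn_integral_eq_integral[OF int nonneg])
  finally have nn: "(\<integral>\<^sup>+s. indicator {0..} s * ennreal (tail M s) \<partial>lborel) = ennreal (first_moment M)" .
  have "0 \<le> first_moment M"
    unfolding first_moment_def by (rule integral_nonneg_AE[OF nonneg])
  from set_integral_eq_of_nn_integral[OF borel_measurable_tail[OF M] _ tail_nonneg this nn]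
  show "set_integrable lborel {0..} (tail M)" "(LBINT s:{0..}. tail M s) = first_moment M"
    by simp_all
qed

lemma weighted_tail_integral_eq_half_second_moment:
  assumes M: "prob_on_Rplus M" and int: "integrable M (\<lambda>y. y ^ 2)"
  shows "set_integrable lborel {0..} (\<lambda>s. s * tail M s)"
    "(LBINT s:{0..}. s * tail M s) = half_second_moment M"
proof -
  have nonneg: "AE y in M. 0 \<le> y" using M by (simp add: prob_on_Rplus_def)
  have "(\<integral>\<^sup>+s. indicator {0..} s * ennreal (s * tail M s) \<partial>lborel)
      = (\<integral>\<^sup>+y. (\<integral>\<^sup>+s. indicator {0..<y} s * ennreal s \<partial>lborel) \<partial>M)"
    using nn_integral_weighted_tail[OF M, of "\<lambda>s. s"] by simp
  also have "\<dots> = (\<integral>\<^sup>+y. ennreal (y ^ 2 / 2) \<partial>M)"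
    using nonneg
  proof (intro nn_integral_cong_AE, eventually_elim)
    fix y :: real assume y: "0 \<le> y"
    have "(\<integral>\<^sup>+s. indicator {0..<y} s * ennreal s \<partial>lborel) = (\<integral>\<^sup>+s. ennreal (s ^ 1 * indicator {0..y} s) \<partial>lborel)"
      using AE_lborel_singleton[of y]
      by (intro nn_integral_cong_AE, eventually_elim) (auto simp: indicator_def)
    also have "\<dots> = ennreal (\<integral>s. s ^ 1 * indicator {0..y} s \<partial>lborel)"
      by (intro nn_integral_eq_integral borel_integrable_atLeastAtMost AE_I2)
         (auto simp: indicator_def)
    also have "\<dots> = ennreal (y ^ 2 / 2)" 
    proof -
      have "(\<integral>s. s ^ 1 * indicator {0..y} s \<partial>lborel) = y ^ 2 / 2"
        using integral_power[OF y, of 1] by (simp add: power2_eq_square)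
      then show ?thesis by (rule arg_cong)
    qed
    finally show "(\<integral>\<^sup>+s. indicator {0..<y} s * ennreal s \<partial>lborel) = ennreal (y ^ 2 / 2)" .
  qed
  also have "\<dots> = ennreal (half_second_moment M)"
    unfolding half_second_moment_def using int by (subst nn_integral_eq_integral) auto
  finally have nn: "(\<integral>\<^sup>+s. indicator {0..} s * ennreal (s * tail M s) \<partial>lborel)
      = ennreal (half_second_moment M)" .
  have "0 \<le> half_second_moment M" by (simp add: half_second_moment_def)
  from set_integral_eq_of_nn_integral[OF _ _ _ this nn]
  show "set_integrable lborel {0..} (\<lambda>s. s * tail M s)"
    "(LBINT s:{0..}. s * tail M s) = half_second_moment M"
    using M tail_nonneg by simp_all
qed

lemma powr_mult_self_le:
  fixes y \<alpha> :: real
  assumes y: "0 \<le> y" and \<alpha>: "1 < \<alpha>"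
  shows "y powr \<alpha> * y \<le> 1 + y powr (2 * \<alpha>)"
proof (cases "y \<le> 1")
  case True
  have "y powr \<alpha> * y \<le> 1 * 1" using True y \<alpha> by (intro mult_mono powr_le1) auto
  then show ?thesis using powr_ge_zero[of y "2 * \<alpha>"] by linarith
next
  case False
  then have "y powr \<alpha> * y = y powr (\<alpha> + 1)" by (simp add: powr_add)
  also have "\<dots> \<le> y powr (2 * \<alpha>)" using False \<alpha> by (intro powr_mono) auto
  finally show ?thesis by simp
qed

lemma set_integrable_powr_tail:
  assumes M: "prob_on_Rplus M" and \<alpha>: "1 < \<alpha>" and int: "integrable M (\<lambda>t. t powr (2 * \<alpha>))"
  shows "set_integrable lborel {0..} (\<lambda>s. s powr \<alpha> * tail M s)"
proof -
  interpret prob_space M using M by (simp add: prob_on_Rplus_def)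
  have nonneg: "AE y in M. 0 \<le> y" using M by (simp add: prob_on_Rplus_def)
  have "(\<integral>\<^sup>+s. indicator {0..} s * ennreal (s powr \<alpha> * tail M s) \<partial>lborel)
      = (\<integral>\<^sup>+y. (\<integral>\<^sup>+s. indicator {0..<y} s * ennreal (s powr \<alpha>) \<partial>lborel) \<partial>M)"
    by (rule nn_integral_weighted_tail[OF M]) measurable
  also have "\<dots> \<le> (\<integral>\<^sup>+y. ennreal (1 + y powr (2 * \<alpha>)) \<partial>M)"
    using nonneg
  proof (intro nn_integral_mono_AE, eventually_elim)
    fix y :: real assume y: "0 \<le> y"
    have "(\<integral>\<^sup>+s. indicator {0..<y} s * ennreal (s powr \<alpha>) \<partial>lborel)
        \<le> (\<integral>\<^sup>+s. ennreal (y powr \<alpha>) * indicator {0..<y} s \<partial>lborel)"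
      using \<alpha> by (intro nn_integral_mono) (auto simp: indicator_def intro!: ennreal_leI powr_mono2)
    also have "\<dots> = ennreal (y powr \<alpha> * y)"
      using y by (simp add: nn_integral_cmult_indicator ennreal_mult)
    also have "\<dots> \<le> ennreal (1 + y powr (2 * \<alpha>))"
      by (intro ennreal_leI powr_mult_self_le y \<alpha>)
    finally show "(\<integral>\<^sup>+s. indicator {0..<y} s * ennreal (s powr \<alpha>) \<partial>lborel) \<le> ennreal (1 + y powr (2 * \<alpha>))" .
  qed
  also have "\<dots> < \<infinity>"
    using int by (subst nn_integral_eq_integral) auto
  finally have "integrable lborel (\<lambda>s. indicator {0..} s * (s powr \<alpha> * tail M s))"
    using M by (intro integrableI_bounded) (auto simp: indicator_mult_ennreal tail_nonneg)
  then show ?thesis by (simp add: set_integrable_def)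
qed

lemma exp_neg_le_quadratic:
  fixes y :: real
  assumes "0 \<le> y"
  shows "exp (- y) \<le> 1 - y + y\<^sup>2 / 2"
proof -
  define f where "f z = 1 - z + z\<^sup>2 / 2 - exp (- z)" for z :: real
  have "f 0 \<le> f y"
  proof (rule DERIV_nonneg_imp_nondecreasing[OF assms])
    fix z :: real
    have "(f has_real_derivative (z - 1 + exp (- z))) (at z)"
      unfolding f_def by (auto intro!: derivative_eq_intros)
    moreover have "0 \<le> z - 1 + exp (- z)" using exp_ge_add_one_self[of "- z"] by simp
    ultimately show "\<exists>d. (f has_real_derivative d) (at z) \<and> 0 \<le> d" by blast
  qed
  then show ?thesis by (simp add: f_def)
qed

lemma exp_neg_le_powr:
  fixes y \<alpha> :: real
  assumes y: "0 \<le> y" and \<alpha>: "1 \<le> \<alpha>" "\<alpha> \<le> 2"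
  shows "exp (- y) \<le> 1 - y + y powr \<alpha>"
proof (cases "y \<le> 1")
  case True
  have "y\<^sup>2 / 2 \<le> y powr 2" using y by (simp add: powr_realpow)
  also have "\<dots> \<le> y powr \<alpha>" using True y \<alpha> by (intro powr_mono') auto
  finally show ?thesis using exp_neg_le_quadratic[OF y] by simp
next
  case False
  have "y = y powr 1" using False by simp
  also have "\<dots> \<le> y powr \<alpha>" using False \<alpha> by (intro powr_mono) auto
  finally have "y \<le> y powr \<alpha>" .
  moreover have "exp (- y) \<le> 1" using y by simp
  ultimately show ?thesis by linarith
qed

lemma set_integral_tilted_tail_le:
  fixes \<Lambda> :: "real measure" and \<theta> \<alpha> x :: real
  assumes M: "prob_on_Rplus \<Lambda>" and int1: "integrable \<Lambda> (\<lambda>y. y)" and int2: "integrable \<Lambda> (\<lambda>y. y ^ 2)"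
    and \<alpha>: "1 \<le> \<alpha>" "\<alpha> \<le> 2" and \<theta>: "0 \<le> \<theta>" and x: "0 \<le> x"
    and int_\<alpha>: "set_integrable lborel {0..} (\<lambda>s. s powr \<alpha> * tail \<Lambda> s)"
  shows "(LBINT s:{0..x}. exp (- \<theta> * s) * tail \<Lambda> s)
    \<le> first_moment \<Lambda> - \<theta> * half_second_moment \<Lambda> + \<theta> powr \<alpha> * (LBINT s:{0..}. s powr \<alpha> * tail \<Lambda> s)"
proof -
  note first = tail_integral_eq_first_moment[OF M int1]
  note second = weighted_tail_integral_eq_half_second_moment[OF M int2]
  define g where "g s = tail \<Lambda> s - \<theta> * (s * tail \<Lambda> s) + \<theta> powr \<alpha> * (s powr \<alpha> * tail \<Lambda> s)" for s
  have g_int: "set_integrable lborel {0..} g"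
    unfolding g_def using first(1) second(1) int_\<alpha> by (intro set_integral_add set_integral_diff) auto
  have tilted_le_g: "exp (- \<theta> * s) * tail \<Lambda> s \<le> g s" if s: "0 \<le> s" for s
  proof -
    have "exp (- (\<theta> * s)) \<le> 1 - \<theta> * s + (\<theta> * s) powr \<alpha>"
      using \<theta> s \<alpha> by (intro exp_neg_le_powr) auto
    then have "exp (- \<theta> * s) \<le> 1 - \<theta> * s + \<theta> powr \<alpha> * s powr \<alpha>"
      using \<theta> s by (simp add: powr_mult)
    then have "exp (- \<theta> * s) * tail \<Lambda> s \<le> (1 - \<theta> * s + \<theta> powr \<alpha> * s powr \<alpha>) * tail \<Lambda> s"
      by (rule mult_right_mono[OF _ tail_nonneg])
    then show ?thesis by (simp add: g_def algebra_simps)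
  qed
  have "(LBINT s:{0..x}. exp (- \<theta> * s) * tail \<Lambda> s) \<le> (LBINT s:{0..x}. g s)"
  proof (rule set_integral_mono[OF _ set_integrable_subset[OF g_int]])
    show "set_integrable lborel {0..x} (\<lambda>s. exp (- \<theta> * s) * tail \<Lambda> s)"
      using M \<theta> by (intro set_integrable_Icc_bounded[where B=1])
        (auto simp: abs_mult tail_nonneg tail_le_one intro!: mult_le_one)
  qed (use tilted_le_g in auto)
  also have "\<dots> \<le> (LBINT s:{0..}. g s)"
  proof (rule set_integral_mono_set_nonneg[OF g_int])
    fix s :: real assume s: "s \<in> {0..}"
    have "0 \<le> exp (- \<theta> * s) * tail \<Lambda> s" by (simp add: tail_nonneg)
    then show "0 \<le> g s" using tilted_le_g[of s] s by simp
  qed auto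
  also have "\<dots> = first_moment \<Lambda> - \<theta> * half_second_moment \<Lambda> + \<theta> powr \<alpha> * (LBINT s:{0..}. s powr \<alpha> * tail \<Lambda> s)"
    unfolding g_def using first second int_\<alpha> by simp
  finally show ?thesis .
qed

lemma powr_tail_integral_le_of_tail_le:
  fixes M L :: "real measure" and C \<alpha> :: real
  assumes M: "prob_on_Rplus M" and int: "set_integrable lborel {0..} (\<lambda>s. s powr \<alpha> * tail L s)"
    and le: "\<And>t. 0 \<le> t \<Longrightarrow> tail M t \<le> C * tail L t"
  shows "set_integrable lborel {0..} (\<lambda>s. s powr \<alpha> * tail M s)"
    and "(LBINT s:{0..}. s powr \<alpha> * tail M s) \<le> C * (LBINT s:{0..}. s powr \<alpha> * tail L s)"
proof -
  have pointwise: "s powr \<alpha> * tail M s \<le> C * (s powr \<alpha> * tail L s)" if "s \<in> {0..}" for s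
  proof -
    have "s powr \<alpha> * tail M s \<le> s powr \<alpha> * (C * tail L s)"
      using le[of s] that by (intro mult_left_mono) auto
    then show ?thesis by (simp add: mult_ac)
  qed
  show int_M: "set_integrable lborel {0..} (\<lambda>s. s powr \<alpha> * tail M s)"
  proof (rule set_integrable_bound[OF set_integrable_mult_right[OF int, of C]])
    show "set_borel_measurable lborel {0..} (\<lambda>s. s powr \<alpha> * tail M s)"
      using M unfolding set_borel_measurable_def by measurable
    show "AE s\<in>{0..} in lborel. norm (s powr \<alpha> * tail M s) \<le> norm (C * (s powr \<alpha> * tail L s))"
      using pointwise by (intro AE_I2) (auto simp: tail_nonneg intro: order_trans[OF _ abs_ge_self])
  qed
  have "(LBINT s:{0..}. s powr \<alpha> * tail M s) \<le> (LBINT s:{0..}. C * (s powr \<alpha> * tail L s))"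
    by (rule set_integral_mono[OF int_M _ pointwise]) (use int in simp)
  then show "(LBINT s:{0..}. s powr \<alpha> * tail M s) \<le> C * (LBINT s:{0..}. s powr \<alpha> * tail L s)"
    by simp
qed

lemma borel_measurable_indicator_mult_locally_integrable:
  fixes f :: "real \<Rightarrow> real"
  assumes int: "\<And>T. 0 \<le> T \<Longrightarrow> set_integrable lborel {0..T} f"
  shows "(\<lambda>t. indicator {0..} t * f t) \<in> borel_measurable borel"
proof (rule borel_measurable_LIMSEQ_real)
  fix k :: nat
  have "integrable lborel (\<lambda>t. indicator {0..real k} t * f t)"
    using int[of "real k"] by (simp add: set_integrable_def)
  then show "(\<lambda>t. indicator {0..real k} t * f t) \<in> borel_measurable borel"
    using borel_measurable_integrable by fastforce
next
  fix t :: real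
  have "\<forall>\<^sub>F k in sequentially. indicator {0..real k} t * f t = indicator {0..} t * f t"
  proof (rule eventually_sequentiallyI)
    fix k assume "nat \<lceil>t\<rceil> \<le> k"
    then have "t \<le> real k" by linarith
    then show "indicator {0..real k} t * f t = indicator {0..} t * f t" by (simp add: indicator_def)
  qed
  then show "(\<lambda>k. indicator {0..real k} t * f t) \<longlonglongrightarrow> indicator {0..} t * f t"
    by (rule tendsto_eventually)
qed

text \<open>\<open>R\<^sup>(\<^sup>n\<^sup>)\<^sub>\<beta>\<close> is \<open>tilted (\<beta> / \<gamma>\<^sub>n) R\<^sup>(\<^sup>n\<^sup>)\<close> on \<open>[0, \<infinity>)\<close>.\<close>

definition tilted :: "real \<Rightarrow> (real \<Rightarrow> real) \<Rightarrow> real \<Rightarrow> real" where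
  "tilted \<theta> f t = exp (- \<theta> * t) * (indicator {0..} t * f t)"

lemma set_integral_tilted_convolution:
  assumes "0 \<le> t"
  shows "exp (- \<theta> * t) * (LBINT s:{0..t}. f (t - s) * g s) = (LBINT s:{0..t}. tilted \<theta> f (t - s) * tilted \<theta> g s)"
proof -
  have "exp (- \<theta> * t) * (LBINT s:{0..t}. f (t - s) * g s) = (LBINT s:{0..t}. exp (- \<theta> * t) * (f (t - s) * g s))"
    by simp
  also have "\<dots> = (LBINT s:{0..t}. tilted \<theta> f (t - s) * tilted \<theta> g s)"
  proof (rule set_lebesgue_integral_cong, simp, intro allI impI)
    fix s assume "s \<in> {0..t}"
    moreover have "exp (- \<theta> * t) = exp (- \<theta> * (t - s)) * exp (- \<theta> * s)"
      by (simp add: exp_add[symmetric] algebra_simps)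
    ultimately show "exp (- \<theta> * t) * (f (t - s) * g s) = tilted \<theta> f (t - s) * tilted \<theta> g s"
      by (simp add: tilted_def)
  qed
  finally show ?thesis .
qed

lemma renewal_equation_tilted:
  fixes \<Lambda> :: "real measure" and R :: "real \<Rightarrow> real" and l m \<theta> :: real
  assumes M: "prob_on_Rplus \<Lambda>" and \<theta>: "0 \<le> \<theta>" and pos: "0 < l * m"
    and mass: "\<And>x. 0 \<le> x \<Longrightarrow> l * m * (LBINT s:{0..x}. exp (- \<theta> * s) * tail \<Lambda> s) \<le> 1"
    and R: "renewal_solution l \<Lambda> m R"
  shows "renewal_equation (tilted \<theta> (\<lambda>t. l * m * tail \<Lambda> t)) (tilted \<theta> R) (l * m)"
proof -
  have R_int: "\<And>T. 0 \<le> T \<Longrightarrow> set_integrable lborel {0..T} R"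
    and R_eq: "\<And>t. 0 \<le> t \<Longrightarrow> R t = l * m * tail \<Lambda> t + l * m * (LBINT s=0..t. R (t - s) * tail \<Lambda> s)"
    using R by (auto simp: renewal_solution_def)
  have tilted_tail_le: "exp (- \<theta> * t) * tail \<Lambda> t \<le> exp (- \<theta> * s) * tail \<Lambda> s" if "s \<le> t" for s t
    using that \<theta> M by (intro mult_mono) (auto simp: tail_nonneg tail_antimono intro: mult_left_mono)
  show ?thesis
  proof
    show "(LBINT s:{0..x}. tilted \<theta> (\<lambda>t. l * m * tail \<Lambda> t) s) \<le> 1" if "0 \<le> x" for x
    proof -
      have "(LBINT s:{0..x}. tilted \<theta> (\<lambda>t. l * m * tail \<Lambda> t) s)
          = (LBINT s:{0..x}. l * m * (exp (- \<theta> * s) * tail \<Lambda> s))"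
        by (rule set_lebesgue_integral_cong) (auto simp: tilted_def)
      then show ?thesis using mass[OF that] by simp
    qed
    show "tilted \<theta> (\<lambda>t. l * m * tail \<Lambda> t) t \<le> l * m" for t
    proof -
      have "exp (- \<theta> * t) * (indicator {0..} t * tail \<Lambda> t) \<le> 1"
        using tilted_tail_le[of 0 t] tail_le_one[OF M, of 0] by (auto simp: indicator_def)
      then have "l * m * (exp (- \<theta> * t) * (indicator {0..} t * tail \<Lambda> t)) \<le> l * m * 1"
        using pos by (intro mult_left_mono) auto
      then show ?thesis by (simp add: tilted_def mult_ac)
    qed
    show "tilted \<theta> (\<lambda>t. l * m * tail \<Lambda> t) t \<le> tilted \<theta> (\<lambda>t. l * m * tail \<Lambda> t) s" if "0 \<le> s" "s \<le> t" for s t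
    proof -
      have "l * m * (exp (- \<theta> * t) * tail \<Lambda> t) \<le> l * m * (exp (- \<theta> * s) * tail \<Lambda> s)"
        using that tilted_tail_le[of s t] pos by (intro mult_left_mono) auto
      then show ?thesis using that by (simp add: tilted_def mult_ac)
    qed
    show "tilted \<theta> (\<lambda>t. l * m * tail \<Lambda> t) \<in> borel_measurable borel"
      unfolding tilted_def using M by measurable
    show "tilted \<theta> R \<in> borel_measurable borel"
      unfolding tilted_def using borel_measurable_indicator_mult_locally_integrable[OF R_int] by measurable
    show "set_integrable lborel {0..T} (tilted \<theta> R)" if T: "0 \<le> T" for T
    proof (rule set_integrable_bound[OF R_int[OF T]])
      show "set_borel_measurable lborel {0..T} (tilted \<theta> R)"
        unfolding set_borel_measurable_def tilted_def
        using borel_measurable_indicator_mult_locally_integrable[OF R_int] by measurable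
      show "AE x\<in>{0..T} in lborel. norm (tilted \<theta> R x) \<le> norm (R x)"
        using \<theta> by (intro AE_I2) (auto simp: tilted_def abs_mult intro!: mult_left_le_one_le)
    qed
    show "tilted \<theta> R t = tilted \<theta> (\<lambda>t. l * m * tail \<Lambda> t) t
        + (LBINT s:{0..t}. tilted \<theta> R (t - s) * tilted \<theta> (\<lambda>t. l * m * tail \<Lambda> t) s)" if t: "0 \<le> t" for t
      using R_eq[OF t] t set_integral_tilted_convolution[OF t, of \<theta> R "\<lambda>t. l * m * tail \<Lambda> t"]
      by (simp add: tilted_def interval_integral_Icc zero_ereal_def algebra_simps)
  qed (use M pos in \<open>auto simp: tilted_def tail_nonneg\<close>)
qed

lemma renewal_solution_tilted_le:
  fixes \<Lambda> :: "real measure" and R :: "real \<Rightarrow> real" and l m \<theta> \<alpha> K t :: real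
  assumes M: "prob_on_Rplus \<Lambda>" and int1: "integrable \<Lambda> (\<lambda>y. y)" and int2: "integrable \<Lambda> (\<lambda>y. y ^ 2)"
    and \<alpha>: "1 \<le> \<alpha>" "\<alpha> \<le> 2" and \<theta>: "0 \<le> \<theta>"
    and int_\<alpha>: "set_integrable lborel {0..} (\<lambda>s. s powr \<alpha> * tail \<Lambda> s)"
    and K: "(LBINT s:{0..}. s powr \<alpha> * tail \<Lambda> s) \<le> K"
    and pos: "0 < l * m"
    and mass: "l * m * (first_moment \<Lambda> - \<theta> * half_second_moment \<Lambda> + \<theta> powr \<alpha> * K) \<le> 1"
    and R: "renewal_solution l \<Lambda> m R" and t: "0 \<le> t"
  shows "exp (- \<theta> * t) * R t \<le> l * m + (l * m + 1) * (2 + 4 * (l * m))"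
proof -
  have "l * m * (LBINT s:{0..x}. exp (- \<theta> * s) * tail \<Lambda> s) \<le> 1" if x: "0 \<le> x" for x
  proof -
    have "(LBINT s:{0..x}. exp (- \<theta> * s) * tail \<Lambda> s)
        \<le> first_moment \<Lambda> - \<theta> * half_second_moment \<Lambda> + \<theta> powr \<alpha> * (LBINT s:{0..}. s powr \<alpha> * tail \<Lambda> s)"
      by (rule set_integral_tilted_tail_le[OF M int1 int2 \<alpha> \<theta> x int_\<alpha>])
    also have "\<dots> \<le> first_moment \<Lambda> - \<theta> * half_second_moment \<Lambda> + \<theta> powr \<alpha> * K"
      using K by (intro add_left_mono mult_left_mono) simp_all
    finally show ?thesis using mass pos by (meson mult_left_mono less_imp_le order_trans)
  qed
  then interpret renewal_equation "tilted \<theta> (\<lambda>t. l * m * tail \<Lambda> t)" "tilted \<theta> R" "l * m"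
    by (rule renewal_equation_tilted[OF M \<theta> pos _ R])
  show ?thesis using v_bounded[OF t] t by (simp add: tilted_def)
qed

lemma tendsto_one_of_scaled_defect:
  fixes g x :: "nat \<Rightarrow> real"
  assumes g: "filterlim g at_top sequentially" and lim: "(\<lambda>n. g n * (1 - x n)) \<longlonglongrightarrow> L"
  shows "x \<longlonglongrightarrow> 1"
proof -
  have "(\<lambda>n. 1 - g n * (1 - x n) * inverse (g n)) \<longlonglongrightarrow> 1 - L * 0"
    by (intro tendsto_intros lim tendsto_inverse_0_at_top[OF g])
  moreover have "\<forall>\<^sub>F n in sequentially. 1 - g n * (1 - x n) * inverse (g n) = x n"
    using filterlim_at_top_dense[THEN iffD1, OF g, rule_format, of 0]
    by eventually_elim (simp add: field_simps)
  ultimately show ?thesis by (simp add: tendsto_cong)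
qed

lemma eventually_tilted_mass_lt_one:
  fixes gam lam eta sig mean :: "nat \<Rightarrow> real" and lam0 sig0 b mlim \<alpha> \<beta> K :: real
  assumes gam: "filterlim gam at_top sequentially"
    and lam: "lam \<longlonglongrightarrow> lam0" "0 < lam0" and sig: "sig \<longlonglongrightarrow> sig0" "0 < sig0"
    and b: "(\<lambda>n. gam n * (1 - lam n * eta n)) \<longlonglongrightarrow> b"
    and m: "(\<lambda>n. gam n * (1 - mean n)) \<longlonglongrightarrow> mlim"
    and \<alpha>: "1 < \<alpha>" and \<beta>: "0 \<le> \<beta>" "- (b + mlim) / (sig0 * lam0) < \<beta>"
  shows "\<forall>\<^sub>F n in sequentially.
    lam n * mean n * (eta n - \<beta> / gam n * sig n + (\<beta> / gam n) powr \<alpha> * K) < 1"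
proof -
  \<comment> \<open>\<open>E n\<close> is \<open>gam n\<close> times the mass defect, regrouped into terms that converge separately\<close>
  define E where "E n = gam n * (1 - lam n * eta n) + lam n * eta n * (gam n * (1 - mean n))
      + lam n * mean n * \<beta> * sig n - lam n * mean n * \<beta> powr \<alpha> * gam n powr (1 - \<alpha>) * K" for n
  have "(\<lambda>n. lam n * eta n) \<longlonglongrightarrow> 1" by (rule tendsto_one_of_scaled_defect[OF gam b])
  moreover have "(\<lambda>n. mean n) \<longlonglongrightarrow> 1" by (rule tendsto_one_of_scaled_defect[OF gam m])
  moreover have "(\<lambda>n. gam n powr (1 - \<alpha>)) \<longlonglongrightarrow> 0"
    by (rule tendsto_neg_powr[OF _ gam]) (use \<alpha> in simp)
  ultimately have "E \<longlonglongrightarrow> b + 1 * mlim + lam0 * 1 * \<beta> * sig0 - lam0 * 1 * \<beta> powr \<alpha> * 0 * K"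
    unfolding E_def by (intro tendsto_intros b m lam sig)
  moreover have "0 < b + 1 * mlim + lam0 * 1 * \<beta> * sig0 - lam0 * 1 * \<beta> powr \<alpha> * 0 * K"
    using \<beta>(2) lam(2) sig(2) by (simp add: divide_less_eq algebra_simps)
  ultimately have "\<forall>\<^sub>F n in sequentially. 0 < E n" by (rule order_tendstoD)
  then show ?thesis
    using filterlim_at_top_dense[THEN iffD1, OF gam, rule_format, of 0]
  proof eventually_elim
    case (elim n)
    define \<theta> where "\<theta> = \<beta> / gam n"
    have \<theta>1: "gam n * \<theta> = \<beta>" using elim by (simp add: \<theta>_def)
    have \<theta>\<alpha>: "gam n * \<theta> powr \<alpha> = \<beta> powr \<alpha> * gam n powr (1 - \<alpha>)"
      using elim \<beta>(1) by (simp add: \<theta>_def powr_divide powr_diff)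
    have "gam n * (1 - lam n * mean n * (eta n - \<theta> * sig n + \<theta> powr \<alpha> * K))
        = gam n - gam n * lam n * mean n * eta n + lam n * mean n * (gam n * \<theta>) * sig n
          - lam n * mean n * (gam n * \<theta> powr \<alpha>) * K"
      by (simp add: algebra_simps)
    also have "\<dots> = E n" unfolding \<theta>1 \<theta>\<alpha> E_def by (simp add: algebra_simps)
    finally have "gam n * (1 - lam n * mean n * (eta n - \<theta> * sig n + \<theta> powr \<alpha> * K)) = E n" .
    with elim have "0 < gam n * (1 - lam n * mean n * (eta n - \<theta> * sig n + \<theta> powr \<alpha> * K))"
      by simp
    then have "0 < 1 - lam n * mean n * (eta n - \<theta> * sig n + \<theta> powr \<alpha> * K)"
      using elim by (simp add: zero_less_mult_iff)
    then show ?case by (simp add: \<theta>_def)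
  qed
qed

theorem lemma5p2:
  fixes lam :: "nat \<Rightarrow> real" and Lam :: "nat \<Rightarrow> real measure"
    and p q :: "nat \<Rightarrow> nat \<Rightarrow> real" and gam :: "nat \<Rightarrow> real"
    and gstar lam0 eta0 sig0 b mlim \<alpha> \<beta> :: real
    and psi phi :: "real \<Rightarrow> real"
    and R :: "nat \<Rightarrow> real \<Rightarrow> real"
  assumes
    \<comment> \<open>standing assumptions\<close>
    lam_pos: "\<forall>n\<ge>1. lam n > 0"
    and Lam_prob: "\<forall>n\<ge>1. prob_on_Rplus (Lam n)"
    and Lam_moments: "\<forall>n\<ge>1. integrable (Lam n) (\<lambda>y. y) \<and> integrable (Lam n) (\<lambda>y. y ^ 2)"
    and p_prob: "\<forall>n\<ge>1. prob_on_Zplus (p n)"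
    and q_prob: "\<forall>n\<ge>1. prob_on_Zplus (q n)"
    and m_fin: "\<forall>n\<ge>1. summable (\<lambda>k. real k * p n k)"
    and gam_pos: "\<forall>n\<ge>1. gam n > 0"
    and gam_inf: "filterlim gam at_top sequentially"
    and gam_ratio: "(\<lambda>n. gam n / real n) \<longlonglongrightarrow> gstar" and gstar_nn: "gstar \<ge> 0"
    \<comment> \<open>Condition 1 (i)\<close>
    and C1_lam: "lam \<longlonglongrightarrow> lam0" "lam0 > 0"
    and C1_eta: "(\<lambda>n. first_moment (Lam n)) \<longlonglongrightarrow> eta0" "eta0 > 0"
    and C1_sig: "(\<lambda>n. half_second_moment (Lam n)) \<longlonglongrightarrow> sig0" "sig0 > 0"
    and C1_b: "(\<lambda>n. gam n * (1 - lam n * first_moment (Lam n))) \<longlonglongrightarrow> b"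
    \<comment> \<open>Condition 1 (ii)\<close>
    and C1_psi: "\<forall>T\<ge>0. uniform_limit {0..T} (psi_n gam q) psi sequentially"
    \<comment> \<open>Condition 1 (iii)\<close>
    and C1_phi_lip: "\<forall>T\<ge>0. \<exists>L. \<forall>n\<ge>1. L-lipschitz_on ({0..T} \<inter> {0..real n}) (phi_n gam p n)"
    and C1_phi_lim: "\<forall>T\<ge>0. uniform_limit {0..T} (phi_n gam p) phi sequentially"
    and C1_phi_cont: "continuous_on {0..} phi"
    \<comment> \<open>the limit m (which exists under Condition 1)\<close>
    and m_lim: "(\<lambda>n. gam n * (1 - mean_nat (p n))) \<longlonglongrightarrow> mlim"
    \<comment> \<open>Condition 2\<close>
    and alpha: "1 < \<alpha>" "\<alpha> < 2"
    and C2_1a: "\<exists>C k0. C > 0 \<and> k0 > 0 \<and> (\<forall>n\<ge>1.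
        summable (\<lambda>k. (real k / real n) powr \<alpha> * p n k) \<and>
        summable (\<lambda>k. real k powr \<alpha> * q n k) \<and>
        real n * gam n * (\<Sum>k. if k0 \<le> real k then (real k / real n) powr \<alpha> * p n k else 0)
          + (\<Sum>k. real k powr \<alpha> * q n k) \<le> C)"
    and C2_1b: "(\<lambda>k1::nat. limsup (\<lambda>n. ereal (gam n *
        (\<Sum>k. if k1 \<le> k then real k * p n k else 0)))) \<longlonglongrightarrow> 0"
    and C2_2: "\<exists>C0 Lstar. C0 > 0 \<and> prob_on_Rplus Lstar \<and>
        integrable Lstar (\<lambda>t. t powr (2 * \<alpha>)) \<and>
        (\<forall>n\<ge>1. \<forall>t\<ge>0. tail (Lam n) t \<le> C0 * tail Lstar t)"
    \<comment> \<open>choice of beta\<close>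
    and beta: "\<beta> \<ge> 0" "\<beta> > - (b + mlim) / (sig0 * lam0)"
    \<comment> \<open>R^(n): the locally integrable solution of the renewal equation\<close>
    and R_sol: "\<forall>n\<ge>1. renewal_solution (lam n) (Lam n) (mean_nat (p n)) (R n)"
  shows "\<exists>n0::nat. n0 \<ge> 1 \<and> (\<exists>C>0. \<forall>n>n0. \<forall>t\<ge>0. exp (- \<beta> * t / gam n) * R n t \<le> C)"
proof -
  \<comment> \<open>only Condition 1 (i), the limit \<open>m\<close> and Condition 2 (2) are needed for this bound\<close>
  obtain C0 Lstar where Lstar: "prob_on_Rplus Lstar"
    and Lstar_int: "integrable Lstar (\<lambda>t. t powr (2 * \<alpha>))"
    and dominated: "\<forall>n\<ge>1. \<forall>t\<ge>0. tail (Lam n) t \<le> C0 * tail Lstar t"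
    using C2_2 by blast
  define K where "K = C0 * (LBINT s:{0..}. s powr \<alpha> * tail Lstar s)"
  note powr_tail = powr_tail_integral_le_of_tail_le[OF _ set_integrable_powr_tail[OF Lstar alpha(1) Lstar_int]]
  define c where "c n = lam n * mean_nat (p n)" for n
  have c_lim: "c \<longlonglongrightarrow> lam0"
    unfolding c_def using C1_lam(1) tendsto_one_of_scaled_defect[OF gam_inf m_lim] by (auto intro: tendsto_eq_intros)
  have "\<forall>\<^sub>F n in sequentially. 0 < c n \<and> c n < lam0 + 1"
    by (intro eventually_conj order_tendstoD(1)[OF c_lim] order_tendstoD(2)[OF c_lim]) (use C1_lam(2) in auto)
  moreover have "\<forall>\<^sub>F n in sequentially. c n * (first_moment (Lam n) - \<beta> / gam n * half_second_moment (Lam n)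
      + (\<beta> / gam n) powr \<alpha> * K) < 1"
    unfolding c_def by (rule eventually_tilted_mass_lt_one[OF gam_inf C1_lam C1_sig C1_b m_lim alpha(1) beta])
  ultimately have "\<forall>\<^sub>F n in sequentially. 0 < c n \<and> c n < lam0 + 1 \<and>
      c n * (first_moment (Lam n) - \<beta> / gam n * half_second_moment (Lam n) + (\<beta> / gam n) powr \<alpha> * K) < 1"
    by eventually_elim blast
  then obtain N where N: "\<And>n. N \<le> n \<Longrightarrow> 0 < c n \<and> c n < lam0 + 1 \<and>
      c n * (first_moment (Lam n) - \<beta> / gam n * half_second_moment (Lam n) + (\<beta> / gam n) powr \<alpha> * K) < 1"
    unfolding eventually_sequentially by blast
  show ?thesis
  proof (intro exI conjI allI impI)
    fix n :: nat and t :: real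
    assume "max N 1 < n" and t: "0 \<le> t"
    then have n: "1 \<le> n" "N \<le> n" by auto
    note powr_tail_n = powr_tail[of "Lam n", OF _ dominated[rule_format, OF n(1)]]
    have "exp (- (\<beta> / gam n) * t) * R n t \<le> c n + (c n + 1) * (2 + 4 * c n)"
      unfolding c_def
      by (rule renewal_solution_tilted_le[OF _ _ _ _ _ _ powr_tail_n(1) _ _ _ _ t])
         (use Lam_prob Lam_moments alpha beta(1) gam_pos R_sol n powr_tail_n(2) N[OF n(2)]
           in \<open>auto simp: c_def K_def\<close>)
    also have "\<dots> \<le> (lam0 + 1) + (lam0 + 1 + 1) * (2 + 4 * (lam0 + 1))"
      using N[OF n(2)] by (intro add_mono mult_mono) (auto simp del: add_le_cancel_right)
    finally show "exp (- \<beta> * t / gam n) * R n t \<le> (lam0 + 1) + (lam0 + 1 + 1) * (2 + 4 * (lam0 + 1))"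
      by simp
  qed (use C1_lam(2) in \<open>auto intro!: add_pos_nonneg\<close>)
qed

end
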